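(* Let $I\subseteq\mathbb{R}$ be an open interval, $f:I\to\mathbb{R}$ continuous, and let $X$ be a random variable on a probability space $(\Omega,\Sigma,\mu)$ such that (i) the range of $X$ is contained in $I$; (ii) the expectations $E(X)$ and $E(f(X))$ exist and are finite; (iii) $E(X)$ is a point of convexity of $f$ relative to $I$. Then $$f(E(X))\le\int_\Omega f(X(\omega))\,d\mu(\omega).$$
   Context: A point $p\in I$ is a point of convexity of $f$ relative to $I$ if $f(p)\le\sum_{k=1}^n\lambda_k f(x_k)$ for every finite family of points $x_1,\dots,x_n\in I$ and positive weights $\lambda_1,\dots,\lambda_n$ with $\sum_k\lambda_k=1$ and $\sum_k\lambda_k x_k=p$. *)

theory Defs
  imports "HOL-Probability.Probability"
begin

definition convexity_point :: "(real \<Rightarrow> real) \<Rightarrow> real set \<Rightarrow> real \<Rightarrow> bool" where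
  "convexity_point f I p \<longleftrightarrow> p \<in> I \<and>
     (\<forall>(n::nat) (x::nat \<Rightarrow> real) (w::nat \<Rightarrow> real).
        (\<forall>k<n. x k \<in> I) \<and> (\<forall>k<n. w k > 0) \<and> (\<Sum>k<n. w k) = 1 \<and>
        (\<Sum>k<n. w k * x k) = p
        \<longrightarrow> f p \<le> (\<Sum>k<n. w k * f (x k)))"

end

theory Submission
  imports Defs
begin

text \<open>A point of convexity p lying in the interior of I admits a supporting line: every chord
  slope to the left of p is at most every chord slope to the right, so the supremum m of the
  left slopes gives f p + m (x - p) \<le> f x on I. Integrating this at x = X \<omega> yields Jensen's
  inequality at p = E(X).\<close>

lemma convexity_point_chord_slopes:
  assumes c: "convexity_point f I p" and "a \<in> I" "b \<in> I" "a < p" "p < b"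
  shows "(f p - f a) / (p - a) \<le> (f b - f p) / (b - p)"
proof -
  define l where "l = (b - p) / (b - a)"
  have l_pos: "l > 0" "1 - l > 0" using assms by (auto simp: l_def field_simps)
  have l_scaled: "l * (b - a) = b - p" using assms unfolding l_def by simp
  have "l * a + (1 - l) * b = b - l * (b - a)" by (simp add: algebra_simps)
  hence barycentre: "l * a + (1 - l) * b = p" using l_scaled by simp
  let ?x = "\<lambda>k::nat. if k = 0 then a else b"
  let ?w = "\<lambda>k::nat. if k = 0 then l else 1 - l"
  have "f p \<le> (\<Sum>k<2. ?w k * f (?x k))"
    using c assms l_pos barycentre unfolding convexity_point_def
    by (elim conjE allE[of _ 2] allE[of _ ?x] allE[of _ ?w])
       (auto simp: numeral_2_eq_2 lessThan_Suc less_Suc_eq)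
  hence "f p \<le> l * f a + (1 - l) * f b" by (simp add: numeral_2_eq_2)
  hence "f p * (b - a) \<le> (l * f a + (1 - l) * f b) * (b - a)"
    using assms by (intro mult_right_mono) auto
  also have "\<dots> = (l * (b - a)) * f a + ((b - a) - l * (b - a)) * f b"
    by (simp add: algebra_simps)
  also have "\<dots> = (b - p) * f a + (p - a) * f b" using l_scaled by simp
  finally have "f p * (b - a) \<le> (b - p) * f a + (p - a) * f b" .
  thus ?thesis using assms by (simp add: field_simps)
qed

lemma convexity_point_supporting_line:
  assumes "open I" and c: "convexity_point f I p"
  obtains m where "\<And>x. x \<in> I \<Longrightarrow> f p + m * (x - p) \<le> f x"
proof -
  have "p \<in> I" using c by (simp add: convexity_point_def)
  then obtain e where e: "e > 0" "ball p e \<subseteq> I" using \<open>open I\<close> open_contains_ball by blast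
  have near: "p - e/2 \<in> I" "p + e/2 \<in> I"
    using e by (auto simp: dist_real_def intro!: subsetD[OF e(2)])
  define S where "S = {a \<in> I. a < p}"
  define L where "L = (\<lambda>a. (f p - f a) / (p - a))"
  define m where "m = (SUP a\<in>S. L a)"
  have S_nonempty: "S \<noteq> {}" using near e unfolding S_def by auto
  have left_le_right: "L a \<le> (f b - f p) / (b - p)" if "a \<in> S" "b \<in> I" "p < b" for a b
    using convexity_point_chord_slopes[OF c] that unfolding S_def L_def by auto
  have bdd: "bdd_above (L ` S)"
    using left_le_right[OF _ near(2)] e by (auto simp: bdd_above_def)
  have "f p + m * (x - p) \<le> f x" if "x \<in> I" for x
  proof (cases x p rule: linorder_cases)
    case less
    hence "x \<in> S" using that S_def by auto
    hence "L x \<le> m" unfolding m_def using bdd by (intro cSUP_upper)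
    hence "L x * (p - x) \<le> m * (p - x)" using less by (intro mult_right_mono) auto
    moreover have "L x * (p - x) = f p - f x" using less by (simp add: L_def)
    ultimately show ?thesis by (simp add: algebra_simps)
  next
    case equal
    thus ?thesis by simp
  next
    case greater
    have "m \<le> (f x - f p) / (x - p)"
      unfolding m_def using S_nonempty left_le_right that greater by (intro cSUP_least) auto
    hence "m * (x - p) \<le> (f x - f p) / (x - p) * (x - p)"
      using greater by (intro mult_right_mono) auto
    thus ?thesis using greater by simp
  qed
  thus thesis by (rule that)
qed

lemma (in prob_space) integral_ge_of_supporting_line_at_expectation:
  fixes X g :: "'a \<Rightarrow> real"
  assumes "integrable M X" "integrable M g"
    and "\<And>\<omega>. \<omega> \<in> space M \<Longrightarrow> c + m * (X \<omega> - expectation X) \<le> g \<omega>"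
  shows "c \<le> (\<integral>\<omega>. g \<omega> \<partial>M)"
proof -
  have "(\<integral>\<omega>. c + m * (X \<omega> - expectation X) \<partial>M)
      = (\<integral>\<omega>. (c - m * expectation X) + m * X \<omega> \<partial>M)"
    by (simp add: algebra_simps)
  also have "\<dots> = c" using assms(1) by (simp add: prob_space)
  finally have "(\<integral>\<omega>. c + m * (X \<omega> - expectation X) \<partial>M) = c" .
  moreover have "(\<integral>\<omega>. c + m * (X \<omega> - expectation X) \<partial>M) \<le> (\<integral>\<omega>. g \<omega> \<partial>M)"
    using assms by (intro integral_mono) auto
  ultimately show ?thesis by simp
qed

theorem theorem4:
  fixes M :: "'a measure" and I :: "real set" and f :: "real \<Rightarrow> real" and X :: "'a \<Rightarrow> real"
  assumes "prob_space M"
    and "open I" and "is_interval I" and "I \<noteq> {}"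
    and "continuous_on I f"
    and "X \<in> borel_measurable M"
    and "\<And>\<omega>. \<omega> \<in> space M \<Longrightarrow> X \<omega> \<in> I"
    and "integrable M X"
    and "integrable M (\<lambda>\<omega>. f (X \<omega>))"
    and "convexity_point f I (prob_space.expectation M X)"
  shows "f (prob_space.expectation M X) \<le> (\<integral>\<omega>. f (X \<omega>) \<partial>M)"
proof -
  interpret prob_space M by fact
  obtain m where "\<And>x. x \<in> I \<Longrightarrow> f (expectation X) + m * (x - expectation X) \<le> f x"
    using convexity_point_supporting_line[OF assms(2,10)] by blast
  then show ?thesis
    using assms(7-9) by (intro integral_ge_of_supporting_line_at_expectation) auto
qed

end
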